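(* Let $0<\alpha<1$ and let a collection of $m$ p-values be partitioned into $n\ge1$ disjoint chunks $\mathcal C_1,\dots,\mathcal C_n$ of sizes $m_{\mathcal C_1},\dots,m_{\mathcal C_n}$, $\sum_i m_{\mathcal C_i}=m$. Then the set of p-values marked significant by the FastLSU multi-chunk algorithm (defined in the context) at level $\alpha$ is exactly the set of p-values rejected by the Benjamini–Hochberg LSU procedure at level $\alpha$ applied to the single batch $\mathcal C=\bigcup_{i=1}^n\mathcal C_i$ of all $m$ p-values.
   Context: The LSU procedure at level $\alpha$ on $m$ p-values: with $p_{(1)}\le\cdots\le p_{(m)}$ the sorted p-values, let $r=\max\{i:\ p_{(i)}<i\alpha/m\}$ ($r=0$ if none) and reject all p-values $<r\alpha/m$. The FastLSU multi-chunk algorithm: Step 1: in each chunk $\mathcal C_i$ count the p-values $<\alpha$, call this count $r^{(1)}_{i}$. Step $k+1$ ($k\ge1$): in each chunk $\mathcal C_i$ count the p-values $<\big(\sum_{j=1}^n r^{(k)}_{j}\big)\alpha/m$, call this count $r^{(k+1)}_{i}$. Repeat until $\sum_j r^{(k+1)}_j=\sum_j r^{(k)}_j$ (or $k+1=m$), and mark as significant the p-values counted in the final step, i.e. all p-values $<\big(\sum_j r^{(k)}_j\big)\alpha/m$. Note that all thresholds use the global number $m$ of p-values, not the chunk sizes. *)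

theory Defs
  imports Main "HOL.Real"
begin

text \<open>p-values are indexed by 0..m-1, given by p :: nat => real.
  Chunks are C 1, ..., C n, a partition of {..<m}.\<close>

text \<open>LSU (Benjamini-Hochberg) procedure on the single batch of all m p-values:
  sorted p-values p_(1) <= ... <= p_(m) are ps!0, ..., ps!(m-1);
  r = max {i. p_(i) < i alpha/m} (0 if none); reject all p-values < r alpha/m.\<close>
definition lsu_r :: "real \<Rightarrow> nat \<Rightarrow> (nat \<Rightarrow> real) \<Rightarrow> nat" where
  "lsu_r \<alpha> m p =
     (let ps = sort (map p [0..<m])
      in Max (insert 0 {i \<in> {1..m}. ps ! (i - 1) < real i * \<alpha> / real m}))"

definition lsu_rejected :: "real \<Rightarrow> nat \<Rightarrow> (nat \<Rightarrow> real) \<Rightarrow> nat set" where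
  "lsu_rejected \<alpha> m p = {j \<in> {..<m}. p j < real (lsu_r \<alpha> m p) * \<alpha> / real m}"

text \<open>FastLSU: fastlsu_r alpha m p n C k i is the count r^(k)_i of step k >= 1 in chunk i.
  (Step index 0 is unused.)\<close>
fun fastlsu_r :: "real \<Rightarrow> nat \<Rightarrow> (nat \<Rightarrow> real) \<Rightarrow> nat \<Rightarrow> (nat \<Rightarrow> nat set) \<Rightarrow> nat \<Rightarrow> nat \<Rightarrow> nat" where
  "fastlsu_r \<alpha> m p n C 0 i = 0"
| "fastlsu_r \<alpha> m p n C (Suc 0) i = card {j \<in> C i. p j < \<alpha>}"
| "fastlsu_r \<alpha> m p n C (Suc (Suc k)) i =
     card {j \<in> C i. p j < real (\<Sum>l = 1..n. fastlsu_r \<alpha> m p n C (Suc k) l) * \<alpha> / real m}"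

definition fastlsu_S :: "real \<Rightarrow> nat \<Rightarrow> (nat \<Rightarrow> real) \<Rightarrow> nat \<Rightarrow> (nat \<Rightarrow> nat set) \<Rightarrow> nat \<Rightarrow> nat" where
  "fastlsu_S \<alpha> m p n C k = (\<Sum>l = 1..n. fastlsu_r \<alpha> m p n C k l)"

definition fastlsu_stop :: "real \<Rightarrow> nat \<Rightarrow> (nat \<Rightarrow> real) \<Rightarrow> nat \<Rightarrow> (nat \<Rightarrow> nat set) \<Rightarrow> nat" where
  "fastlsu_stop \<alpha> m p n C =
     (LEAST k. 1 \<le> k \<and> (fastlsu_S \<alpha> m p n C (Suc k) = fastlsu_S \<alpha> m p n C k \<or> Suc k = m))"

text \<open>Marked significant: the p-values counted in the final step k+1, i.e. those
  (in some chunk) below S(k) alpha / m.\<close>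
definition fastlsu_marked :: "real \<Rightarrow> nat \<Rightarrow> (nat \<Rightarrow> real) \<Rightarrow> nat \<Rightarrow> (nat \<Rightarrow> nat set) \<Rightarrow> nat set" where
  "fastlsu_marked \<alpha> m p n C =
     {j. \<exists>i \<in> {1..n}. j \<in> C i \<and>
        p j < real (fastlsu_S \<alpha> m p n C (fastlsu_stop \<alpha> m p n C)) * \<alpha> / real m}"

end

theory Submission
  imports Defs "HOL-Library.Multiset"
begin

text \<open>Let \<open>g i\<close> be the number of p-values below \<open>i \<alpha> / m\<close>; \<open>g\<close> is monotone and bounded by \<open>m\<close>.
  Since the \<open>i\<close>-th smallest p-value is below a threshold iff at least \<open>i\<close> p-values are,
  the LSU index \<open>r\<close> is the greatest \<open>i \<le> m\<close> with \<open>i \<le> g i\<close>; monotonicity makes it a fixed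
  point of \<open>g\<close> dominating all others. FastLSU computes the iterates \<open>g(m), g(g(m)), \<dots>\<close>:
  they decrease and stay above \<open>r\<close>, so when they stabilise they sit at a fixed point,
  i.e. at \<open>r\<close>, and if they strictly decrease for \<open>m\<close> steps they reach \<open>0\<close>, which then is \<open>r\<close>.
  The final threshold \<open>s\<close> thus satisfies \<open>g s = r = g r\<close> with \<open>r \<le> s\<close>, so the p-values
  below \<open>s \<alpha> / m\<close> and below \<open>r \<alpha> / m\<close> are the same.\<close>

definition pvals_below :: "(nat \<Rightarrow> real) \<Rightarrow> nat \<Rightarrow> real \<Rightarrow> nat set" where
  "pvals_below p m t = {j \<in> {..<m}. p j < t}"

definition bh_count :: "real \<Rightarrow> nat \<Rightarrow> (nat \<Rightarrow> real) \<Rightarrow> nat \<Rightarrow> nat" where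
  "bh_count \<alpha> m p i = card (pvals_below p m (real i * \<alpha> / real m))"

definition greatest_postfp :: "(nat \<Rightarrow> nat) \<Rightarrow> nat \<Rightarrow> nat" where
  "greatest_postfp g m = Max (insert 0 {i \<in> {1..m}. i \<le> g i})"

lemma greatest_postfp_mem: "greatest_postfp g m \<in> insert 0 {i \<in> {1..m}. i \<le> g i}"
  unfolding greatest_postfp_def by (intro Max_in) auto

lemma greatest_postfp_le: "greatest_postfp g m \<le> m"
  using greatest_postfp_mem[of g m] by auto

lemma greatest_postfp_le_image: "greatest_postfp g m \<le> g (greatest_postfp g m)"
  using greatest_postfp_mem[of g m] by auto

lemma le_greatest_postfp:
  assumes "i \<le> m" and "i \<le> g i"
  shows "i \<le> greatest_postfp g m"
  unfolding greatest_postfp_def using assms by (cases "i = 0") (auto intro: Max_ge)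

lemma greatest_postfp_fixed:
  assumes "mono g" and "\<And>i. g i \<le> m"
  shows "g (greatest_postfp g m) = greatest_postfp g m"
proof -
  let ?r = "greatest_postfp g m"
  have "g ?r \<le> g (g ?r)"
    using \<open>mono g\<close> greatest_postfp_le_image by (rule monoD)
  then have "g ?r \<le> ?r"
    using assms(2) by (rule le_greatest_postfp[rotated])
  then show ?thesis
    using greatest_postfp_le_image[of g m] by simp
qed

lemma funpow_Suc_le:
  assumes "mono g" and "g x \<le> x"
  shows "(g ^^ Suc k) x \<le> (g ^^ k) x"
proof (induction k)
  case (Suc k)
  then show ?case using \<open>mono g\<close> by (simp add: monoD)
qed (use assms in simp)

lemma fixed_le_funpow:
  assumes "mono g" and "g r = r" and "r \<le> x"
  shows "r \<le> (g ^^ k) x"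
proof (induction k)
  case (Suc k)
  from \<open>mono g\<close> Suc have "g r \<le> g ((g ^^ k) x)" by (rule monoD)
  then show ?case using \<open>g r = r\<close> by simp
qed (use assms in simp)

lemma funpow_stable:
  fixes g :: "'a \<Rightarrow> 'a"
  assumes "(g ^^ Suc j) x = (g ^^ j) x" and "j \<le> k"
  shows "(g ^^ Suc k) x = (g ^^ k) x"
proof -
  have stays: "(g ^^ (j + d)) x = (g ^^ j) x" for d
    by (induction d) (use assms(1) in simp_all)
  obtain d where "k = j + d"
    using assms(2) le_Suc_ex by blast
  then show ?thesis
    using stays[of d] stays[of "Suc d"] by simp
qed

lemma funpow_strict_descent:
  fixes g :: "nat \<Rightarrow> nat"
  assumes "\<And>j. j < K \<Longrightarrow> (g ^^ Suc j) x < (g ^^ j) x"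
  shows "(g ^^ K) x + K \<le> x"
  using assms
proof (induction K)
  case (Suc K)
  have "(g ^^ K) x + K \<le> x"
    using Suc.IH Suc.prems by simp
  moreover have "(g ^^ Suc K) x < (g ^^ K) x"
    using Suc.prems by blast
  ultimately show ?case by linarith
qed simp

lemma funpow_stop_eq_greatest_postfp:
  assumes "mono g" and bound: "\<And>i. g i \<le> m"
    and stop: "(g ^^ Suc k) m = (g ^^ k) m \<or> Suc k = m"
  shows "(g ^^ Suc k) m = greatest_postfp g m"
proof -
  let ?T = "\<lambda>k. (g ^^ k) m" and ?r = "greatest_postfp g m"
  have dec: "?T (Suc j) \<le> ?T j" for j
    using \<open>mono g\<close> bound by (rule funpow_Suc_le)
  have above: "?r \<le> ?T j" for j
    using assms(1) greatest_postfp_fixed[OF assms(1,2)] greatest_postfp_le by (rule fixed_le_funpow)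
  show ?thesis
  proof (cases "?T (Suc k) = ?T k")
    case True
    then have "g (?T k) = ?T k" by simp
    then have "?T k \<le> ?r"
      using bound[of "?T k"] by (intro le_greatest_postfp) simp_all
    with above[of k] have "?T k = ?r" by linarith
    with True show ?thesis by (simp only:)
  next
    case False
    have "?T (Suc j) < ?T j" if "j < Suc k" for j
    proof -
      have "?T (Suc j) \<noteq> ?T j"
        using False funpow_stable[where g=g and j=j and x=m and k=k] that by auto
      with dec[of j] show ?thesis by (simp only: order.not_eq_order_implies_strict)
    qed
    then have "?T (Suc k) + Suc k \<le> m"
      by (rule funpow_strict_descent)
    moreover have "Suc k = m"
      using stop False by blast
    ultimately have "?T (Suc k) = 0" by linarith
    with above[of "Suc k"] show ?thesis by linarith
  qed
qed

lemma sorted_nth_less_iff_le_length_filter: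
  fixes xs :: "'a::linorder list"
  assumes "sorted xs" and "1 \<le> i" and "i \<le> length xs"
  shows "xs ! (i - 1) < t \<longleftrightarrow> i \<le> length (filter (\<lambda>x. x < t) xs)"
proof
  assume below: "xs ! (i - 1) < t"
  have "{..<i} \<subseteq> {q. q < length xs \<and> xs ! q < t}"
  proof
    fix q assume "q \<in> {..<i}"
    then have "xs ! q \<le> xs ! (i - 1)"
      using assms by (intro sorted_nth_mono) auto
    with below \<open>q \<in> {..<i}\<close> assms(3) show "q \<in> {q. q < length xs \<and> xs ! q < t}" by auto
  qed
  then have "card {..<i} \<le> card {q. q < length xs \<and> xs ! q < t}"
    by (intro card_mono) auto
  then show "i \<le> length (filter (\<lambda>x. x < t) xs)"
    by (simp add: length_filter_conv_card)
next
  assume many: "i \<le> length (filter (\<lambda>x. x < t) xs)"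
  show "xs ! (i - 1) < t"
  proof (rule ccontr)
    assume "\<not> xs ! (i - 1) < t"
    have "{q. q < length xs \<and> xs ! q < t} \<subseteq> {..<i - 1}"
    proof (rule subsetI, rule ccontr)
      fix q assume q: "q \<in> {q. q < length xs \<and> xs ! q < t}" and "q \<notin> {..<i - 1}"
      then have "xs ! (i - 1) \<le> xs ! q"
        using assms(1) by (intro sorted_nth_mono) auto
      with q \<open>\<not> xs ! (i - 1) < t\<close> show False by (auto dest: le_less_trans)
    qed
    then have "card {q. q < length xs \<and> xs ! q < t} \<le> i - 1"
      using card_mono[of "{..<i - 1}"] by fastforce
    with many assms(2) show False
      by (simp add: length_filter_conv_card)
  qed
qed

lemma length_filter_sort_map_upt:
  "length (filter (\<lambda>x. x < t) (sort (map p [0..<m]))) = card (pvals_below p m t)"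
proof -
  have "length (filter (\<lambda>x. x < t) (sort (map p [0..<m])))
      = length (filter (\<lambda>x. x < t) (map p [0..<m]))"
    by (metis mset_filter mset_sort size_mset)
  also have "\<dots> = length (filter (\<lambda>j. p j < t) [0..<m])"
    by (simp add: filter_map comp_def)
  also have "\<dots> = card (set (filter (\<lambda>j. p j < t) [0..<m]))"
    by (metis distinct_card distinct_filter distinct_upt)
  also have "set (filter (\<lambda>j. p j < t) [0..<m]) = pvals_below p m t"
    by (auto simp: pvals_below_def)
  finally show ?thesis .
qed

lemma lsu_r_eq_greatest_postfp: "lsu_r \<alpha> m p = greatest_postfp (bh_count \<alpha> m p) m"
proof -
  let ?ps = "sort (map p [0..<m])"
  have "{i \<in> {1..m}. ?ps ! (i - 1) < real i * \<alpha> / real m} = {i \<in> {1..m}. i \<le> bh_count \<alpha> m p i}"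
    using sorted_nth_less_iff_le_length_filter[of ?ps] length_filter_sort_map_upt[of _ p m]
    by (auto simp: bh_count_def)
  then show ?thesis
    by (simp add: lsu_r_def greatest_postfp_def)
qed

lemma lsu_rejected_eq_pvals_below:
  "lsu_rejected \<alpha> m p = pvals_below p m (real (lsu_r \<alpha> m p) * \<alpha> / real m)"
  by (simp add: lsu_rejected_def pvals_below_def)

lemma card_pvals_below_le: "card (pvals_below p m t) \<le> m"
  using card_mono[of "{..<m}" "pvals_below p m t"] by (auto simp: pvals_below_def)

lemma pvals_below_mono: "s \<le> t \<Longrightarrow> pvals_below p m s \<subseteq> pvals_below p m t"
  by (auto simp: pvals_below_def)

lemma pvals_below_eq_of_card_eq:
  assumes "s \<le> t" and "card (pvals_below p m s) = card (pvals_below p m t)"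
  shows "pvals_below p m s = pvals_below p m t"
  using assms by (intro card_subset_eq pvals_below_mono) (auto simp: pvals_below_def)

lemma bh_threshold_mono:
  "0 \<le> \<alpha> \<Longrightarrow> i \<le> j \<Longrightarrow> real i * \<alpha> / real m \<le> real j * \<alpha> / real m"
  by (intro divide_right_mono mult_right_mono) auto

lemma mono_bh_count: "0 \<le> \<alpha> \<Longrightarrow> mono (bh_count \<alpha> m p)"
  unfolding bh_count_def
  by (intro monoI card_mono pvals_below_mono bh_threshold_mono) (auto simp: pvals_below_def)

lemma sum_card_partition:
  fixes m :: nat
  assumes "\<forall>i \<in> I. C i \<subseteq> {..<m}"
    and "\<forall>i \<in> I. \<forall>i' \<in> I. i \<noteq> i' \<longrightarrow> C i \<inter> C i' = {}"
    and "(\<Union>i \<in> I. C i) = {..<m}" and "finite I"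
  shows "(\<Sum>i \<in> I. card {j \<in> C i. P j}) = card {j \<in> {..<m}. P j}"
proof -
  have "(\<Sum>i \<in> I. card {j \<in> C i. P j}) = card (\<Union>i \<in> I. {j \<in> C i. P j})"
  proof (rule card_UN_disjoint[symmetric])
    show "\<forall>i \<in> I. finite {j \<in> C i. P j}"
      using assms(1) by (blast intro: finite_subset[where B = "{..<m}"])
    show "\<forall>i \<in> I. \<forall>i' \<in> I. i \<noteq> i' \<longrightarrow> {j \<in> C i. P j} \<inter> {j \<in> C i'. P j} = {}"
      using assms(2) by blast
  qed (rule assms(4))
  also have "(\<Union>i \<in> I. {j \<in> C i. P j}) = {j \<in> {..<m}. P j}"
    using assms(3) by blast
  finally show ?thesis .
qed

text \<open>For \<open>m = 0\<close> the first threshold \<open>m \<alpha> / m\<close> of the iteration would be \<open>0\<close>, not \<open>\<alpha>\<close>.\<close>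

lemma fastlsu_S_eq_funpow:
  assumes "0 < m"
    and "\<forall>i \<in> {1..n}. C i \<subseteq> {..<m}"
    and "\<forall>i \<in> {1..n}. \<forall>i' \<in> {1..n}. i \<noteq> i' \<longrightarrow> C i \<inter> C i' = {}"
    and "(\<Union>i \<in> {1..n}. C i) = {..<m}"
  shows "fastlsu_S \<alpha> m p n C (Suc k) = (bh_count \<alpha> m p ^^ Suc k) m"
proof -
  have chunk_sum: "(\<Sum>l = 1..n. card {j \<in> C l. p j < t}) = card (pvals_below p m t)" for t
    unfolding pvals_below_def using assms(2-4) by (intro sum_card_partition) auto
  show ?thesis
  proof (induction k)
    case 0
    show ?case
      using chunk_sum[of \<alpha>] \<open>0 < m\<close> by (simp add: fastlsu_S_def bh_count_def)
  next
    case (Suc k)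
    then show ?case
      using chunk_sum by (simp add: fastlsu_S_def bh_count_def)
  qed
qed

lemma fastlsu_marked_eq_pvals_below:
  assumes "(\<Union>i \<in> {1..n}. C i) = {..<m}"
  shows "fastlsu_marked \<alpha> m p n C
       = pvals_below p m (real (fastlsu_S \<alpha> m p n C (fastlsu_stop \<alpha> m p n C)) * \<alpha> / real m)"
  unfolding fastlsu_marked_def pvals_below_def using assms by blast

lemma fastlsu_stop_spec:
  assumes "0 < m" and S: "\<And>k. fastlsu_S \<alpha> m p n C (Suc k) = (g ^^ Suc k) m"
    and "mono g" and "\<And>i. g i \<le> m"
  obtains k where "fastlsu_stop \<alpha> m p n C = Suc k"
    and "(g ^^ Suc (Suc k)) m = (g ^^ Suc k) m \<or> Suc (Suc k) = m"
proof -
  let ?P = "\<lambda>k. 1 \<le> k \<and> (fastlsu_S \<alpha> m p n C (Suc k) = fastlsu_S \<alpha> m p n C k \<or> Suc k = m)"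
  have "(g ^^ Suc m) m = (g ^^ m) m"
  proof (rule ccontr)
    assume "(g ^^ Suc m) m \<noteq> (g ^^ m) m"
    then have "(g ^^ Suc j) m < (g ^^ j) m" if "j < Suc m" for j
      using that funpow_stable[where g=g and j=j and x=m and k=m] funpow_Suc_le[OF assms(3,4), of j] by fastforce
    then show False
      using funpow_strict_descent[where K="Suc m" and g=g and x=m] by simp
  qed
  then have "?P m"
    using assms(1) S[of m] S[of "m - 1"] by simp
  then have "?P (fastlsu_stop \<alpha> m p n C)"
    unfolding fastlsu_stop_def by (rule LeastI)
  then obtain k where k: "fastlsu_stop \<alpha> m p n C = Suc k" and "?P (Suc k)"
    by (cases "fastlsu_stop \<alpha> m p n C") auto
  then show thesis
    using S[of k] S[of "Suc k"] by (intro that) simp_all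
qed

theorem theorem3:
  fixes \<alpha> :: real and m n :: nat and p :: "nat \<Rightarrow> real" and C :: "nat \<Rightarrow> nat set"
  assumes "0 < \<alpha>" and "\<alpha> < 1"
    and "n \<ge> 1"
    and "\<forall>j < m. 0 \<le> p j \<and> p j \<le> 1"
    and "\<forall>i \<in> {1..n}. C i \<subseteq> {..<m}"
    and "\<forall>i \<in> {1..n}. \<forall>i' \<in> {1..n}. i \<noteq> i' \<longrightarrow> C i \<inter> C i' = {}"
    and "(\<Union>i \<in> {1..n}. C i) = {..<m}"
  shows "fastlsu_marked \<alpha> m p n C = lsu_rejected \<alpha> m p"
proof (cases "m = 0")
  case True
  then show ?thesis
    unfolding fastlsu_marked_eq_pvals_below[OF assms(7)] lsu_rejected_eq_pvals_below pvals_below_def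
    by simp
next
  case False
  define g where "g = bh_count \<alpha> m p"
  define r where "r = greatest_postfp g m"
  have "mono g" and bound: "\<And>i. g i \<le> m"
    using mono_bh_count assms(1) card_pvals_below_le by (auto simp: g_def bh_count_def)
  have S: "fastlsu_S \<alpha> m p n C (Suc j) = (g ^^ Suc j) m" for j
    unfolding g_def using False assms(5-7) by (intro fastlsu_S_eq_funpow) auto
  obtain k where k: "fastlsu_stop \<alpha> m p n C = Suc k"
    and stop: "(g ^^ Suc (Suc k)) m = (g ^^ Suc k) m \<or> Suc (Suc k) = m"
    using fastlsu_stop_spec[OF _ S \<open>mono g\<close> bound] False by blast
  define s where "s = (g ^^ Suc k) m"
  have "g s = r"
    using funpow_stop_eq_greatest_postfp[OF \<open>mono g\<close> bound stop] by (simp add: s_def r_def)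
  moreover have "g r = r"
    unfolding r_def using \<open>mono g\<close> bound by (rule greatest_postfp_fixed)
  moreover have "r \<le> s"
    unfolding s_def using \<open>mono g\<close> \<open>g r = r\<close> greatest_postfp_le unfolding r_def by (rule fixed_le_funpow)
  ultimately have "pvals_below p m (real r * \<alpha> / real m) = pvals_below p m (real s * \<alpha> / real m)"
    using assms(1) by (intro pvals_below_eq_of_card_eq bh_threshold_mono) (auto simp: g_def bh_count_def)
  then show ?thesis
    using S[of k] k
    by (simp add: fastlsu_marked_eq_pvals_below[OF assms(7)] lsu_rejected_eq_pvals_below
        lsu_r_eq_greatest_postfp r_def g_def s_def)
qed

end
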